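(* Let $\psi:C_Z\to\mathbb{R}$ be an increasing convex functional such that $\lim_{z\to+\infty}\psi(n(Z-z)^+)=\psi(0)$ for every $n\in\mathbb{N}$. Then for every $X\in C_Z$ there exists $\varepsilon>0$ with $\lim_{z\to+\infty}\psi(X+\varepsilon(Z-z)^+)=\psi(X)$.
   Context: Fix integers $J\ge0$, $T\ge1$. $\Omega$ is a non-empty subset of $((0,\infty)\times\mathbb{R}^J)^T$ with the Euclidean metric. $Z:\Omega\to[1,\infty)$ is continuous with $\{\omega\in\Omega:Z(\omega)\le z\}$ compact for every $z\in\mathbb{R}_+$. $C_Z$ is the space of continuous $X:\Omega\to\mathbb{R}$ with $X/Z$ bounded. $\psi$ increasing means $\psi(X)\ge\psi(Y)$ whenever $X\ge Y$. *)

theory Defs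
  imports "HOL-Analysis.Analysis"
begin

text \<open>Points of ((0,inf) x R^J)^T are encoded as vectors in real^'n (Euclidean metric),
  where the coordinates are indexed through a bijection e : {..<T} x {..J} -> 'n;
  coordinate e(t,0) is the positive component at period t, e(t,j) for 1<=j<=J the R^J part.\<close>

definition state_space :: "nat \<Rightarrow> nat \<Rightarrow> (nat \<times> nat \<Rightarrow> 'n::finite) \<Rightarrow> (real^'n) set" where
  "state_space T J e = {\<omega>. \<forall>t<T. \<omega> $ e (t, 0) > 0}"

definition CZ :: "'a::topological_space set \<Rightarrow> ('a \<Rightarrow> real) \<Rightarrow> ('a \<Rightarrow> real) set" where
  "CZ \<Omega> Z = {X. continuous_on \<Omega> X \<and> (\<exists>c. \<forall>\<omega>\<in>\<Omega>. \<bar>X \<omega> / Z \<omega>\<bar> \<le> c)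
                 \<and> (\<forall>\<omega>. \<omega> \<notin> \<Omega> \<longrightarrow> X \<omega> = 0)}"

definition increasing_on_CZ :: "'a set \<Rightarrow> ('a \<Rightarrow> real) set \<Rightarrow> (('a \<Rightarrow> real) \<Rightarrow> real) \<Rightarrow> bool" where
  "increasing_on_CZ \<Omega> C \<psi> \<longleftrightarrow>
     (\<forall>X\<in>C. \<forall>Y\<in>C. (\<forall>\<omega>\<in>\<Omega>. X \<omega> \<ge> Y \<omega>) \<longrightarrow> \<psi> X \<ge> \<psi> Y)"

definition convex_on_CZ :: "('a \<Rightarrow> real) set \<Rightarrow> (('a \<Rightarrow> real) \<Rightarrow> real) \<Rightarrow> bool" where
  "convex_on_CZ C \<psi> \<longleftrightarrow>
     (\<forall>X\<in>C. \<forall>Y\<in>C. \<forall>l::real. 0 \<le> l \<and> l \<le> 1 \<longrightarrow>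
        \<psi> (\<lambda>\<omega>. l * X \<omega> + (1 - l) * Y \<omega>) \<le> l * \<psi> X + (1 - l) * \<psi> Y)"

definition shiftZ :: "'a set \<Rightarrow> ('a \<Rightarrow> real) \<Rightarrow> ('a \<Rightarrow> real) \<Rightarrow> real \<Rightarrow> real \<Rightarrow> 'a \<Rightarrow> real" where
  "shiftZ \<Omega> Z X c z = (\<lambda>\<omega>. if \<omega> \<in> \<Omega> then X \<omega> + c * max 0 (Z \<omega> - z) else 0)"

end

theory Submission
  imports Defs
begin

text \<open>Take \<open>\<epsilon> = 1\<close>. For every \<open>n > 2\<close>, convexity splits
  \<open>X + (Z - z)\<^sup>+\<close> as \<open>(1 - 1/n) \<cdot> (n/(n-1)) X + (1/n) \<cdot> n (Z - z)\<^sup>+\<close>, and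
  \<open>(n/(n-1)) X\<close> in turn as a convex combination of \<open>X\<close> and \<open>2X\<close>; this gives
  \<open>\<psi>(X + (Z - z)\<^sup>+) \<le> \<psi>(X) + (\<psi>(2X) + \<psi>(n (Z - z)\<^sup>+) - 2\<psi>(X))/n\<close>.
  As \<open>z \<rightarrow> \<infinity>\<close> the middle term tends to \<open>\<psi>(0)\<close>, so the excess over \<open>\<psi>(X)\<close> is
  eventually \<open>O(1/n)\<close>; monotonicity bounds it below by \<open>0\<close>.\<close>

lemma tendsto_of_bounds_vanishing_in_n:
  fixes f :: "'a \<Rightarrow> real" and g :: "nat \<Rightarrow> 'a \<Rightarrow> real"
  assumes lower: "\<And>z. L \<le> f z"
    and upper: "\<And>n z. 2 < n \<Longrightarrow> f z \<le> L + (A + g n z) / real n"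
    and g: "\<And>n. (g n \<longlongrightarrow> 0) F"
  shows "(f \<longlongrightarrow> L) F"
proof (rule tendstoI)
  fix \<epsilon> :: real assume "0 < \<epsilon>"
  obtain n :: nat where n: "max 2 ((\<bar>A\<bar> + 1) / \<epsilon>) < real n"
    using reals_Archimedean2 by blast
  then have "2 < n" and small: "(\<bar>A\<bar> + 1) / real n < \<epsilon>"
    using \<open>0 < \<epsilon>\<close> by (auto simp: field_simps)
  show "\<forall>\<^sub>F z in F. dist (f z) L < \<epsilon>"
    using tendstoD[OF g zero_less_one, of n]
  proof eventually_elim
    case (elim z)
    have "f z - L \<le> (A + g n z) / real n"
      using upper[OF \<open>2 < n\<close>, of z] by simp
    also have "\<dots> < (\<bar>A\<bar> + 1) / real n"
      using elim \<open>2 < n\<close> by (intro divide_strict_right_mono) (auto simp: dist_real_def)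
    finally show ?case
      using lower[of z] small by (simp add: dist_real_def)
  qed
qed

lemma CZ_zero: "(\<lambda>_. 0) \<in> CZ \<Omega> Z"
  unfolding CZ_def by auto

lemma CZ_scale:
  assumes "X \<in> CZ \<Omega> Z"
  shows "(\<lambda>\<omega>. a * X \<omega>) \<in> CZ \<Omega> Z"
proof -
  from assms obtain c where c: "\<forall>\<omega>\<in>\<Omega>. \<bar>X \<omega> / Z \<omega>\<bar> \<le> c"
    and "continuous_on \<Omega> X" and "\<forall>\<omega>. \<omega> \<notin> \<Omega> \<longrightarrow> X \<omega> = 0"
    unfolding CZ_def by blast
  moreover have "\<bar>a * X \<omega> / Z \<omega>\<bar> \<le> \<bar>a\<bar> * c" if "\<omega> \<in> \<Omega>" for \<omega>
    using mult_left_mono[OF c[rule_format, OF that] abs_ge_zero[of a]]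
    by (simp add: abs_mult)
  ultimately show ?thesis
    unfolding CZ_def by (auto intro!: continuous_intros)
qed

lemma CZ_shiftZ:
  assumes "X \<in> CZ \<Omega> Z" and Zcont: "continuous_on \<Omega> Z" and Zge: "\<forall>\<omega>\<in>\<Omega>. 1 \<le> Z \<omega>"
  shows "shiftZ \<Omega> Z X a z \<in> CZ \<Omega> Z"
proof -
  from assms obtain c where c: "\<forall>\<omega>\<in>\<Omega>. \<bar>X \<omega> / Z \<omega>\<bar> \<le> c"
    and "continuous_on \<Omega> X"
    unfolding CZ_def by blast
  then have "continuous_on \<Omega> (\<lambda>\<omega>. X \<omega> + a * max 0 (Z \<omega> - z))"
    using Zcont by (auto intro!: continuous_intros)
  then have cont: "continuous_on \<Omega> (shiftZ \<Omega> Z X a z)"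
    by (rule continuous_on_cong[THEN iffD1, rotated 2]) (auto simp: shiftZ_def)
  have "\<bar>shiftZ \<Omega> Z X a z \<omega> / Z \<omega>\<bar> \<le> c + \<bar>a\<bar> * (1 + \<bar>z\<bar>)" if \<omega>: "\<omega> \<in> \<Omega>" for \<omega>
  proof -
    have Z1: "1 \<le> Z \<omega>" using Zge \<omega> by blast
    have "\<bar>z\<bar> \<le> Z \<omega> * \<bar>z\<bar>" using mult_right_mono[OF Z1, of "\<bar>z\<bar>"] by simp
    then have ratio: "max 0 (Z \<omega> - z) / Z \<omega> \<le> 1 + \<bar>z\<bar>"
      using Z1 by (simp add: divide_le_eq algebra_simps)
    have "\<bar>a * max 0 (Z \<omega> - z) / Z \<omega>\<bar> \<le> \<bar>a\<bar> * (1 + \<bar>z\<bar>)"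
      using mult_left_mono[OF ratio abs_ge_zero[of a]] Z1 by (simp add: abs_mult)
    moreover have "shiftZ \<Omega> Z X a z \<omega> / Z \<omega> = X \<omega> / Z \<omega> + a * max 0 (Z \<omega> - z) / Z \<omega>"
      using \<omega> by (simp add: shiftZ_def add_divide_distrib)
    ultimately show ?thesis
      using c \<omega> by (smt (verit))
  qed
  then show ?thesis
    using cont unfolding CZ_def by (auto simp: shiftZ_def)
qed

lemma convex_on_CZD:
  assumes "convex_on_CZ C \<psi>" "X \<in> C" "Y \<in> C" "0 \<le> l" "l \<le> 1"
  shows "\<psi> (\<lambda>\<omega>. l * X \<omega> + (1 - l) * Y \<omega>) \<le> l * \<psi> X + (1 - l) * \<psi> Y"
  using assms unfolding convex_on_CZ_def by blast

lemma increasing_on_CZ_shiftZ: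
  assumes "increasing_on_CZ \<Omega> (CZ \<Omega> Z) \<psi>" "X \<in> CZ \<Omega> Z" "0 \<le> a"
    "continuous_on \<Omega> Z" "\<forall>\<omega>\<in>\<Omega>. 1 \<le> Z \<omega>"
  shows "\<psi> X \<le> \<psi> (shiftZ \<Omega> Z X a z)"
  using assms CZ_shiftZ[of X \<Omega> Z a z]
  unfolding increasing_on_CZ_def by (auto simp: shiftZ_def)

lemma convex_on_CZ_shiftZ_le:
  fixes n :: real
  assumes conv: "convex_on_CZ (CZ \<Omega> Z) \<psi>" and X: "X \<in> CZ \<Omega> Z"
    and Zcont: "continuous_on \<Omega> Z" and Zge: "\<forall>\<omega>\<in>\<Omega>. 1 \<le> Z \<omega>" and n: "2 < n"
  shows "\<psi> (shiftZ \<Omega> Z X 1 z)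
           \<le> ((n - 2) * \<psi> X + \<psi> (\<lambda>\<omega>. 2 * X \<omega>) + \<psi> (shiftZ \<Omega> Z (\<lambda>_. 0) n z)) / n"
proof -
  define l1 where "l1 = (n - 2) / (n - 1)"
  define l2 where "l2 = (n - 1) / n"
  define c where "c = n / (n - 1)"
  define Y where "Y = (\<lambda>\<omega>. c * X \<omega>)"
  define S where "S = shiftZ \<Omega> Z (\<lambda>_. 0) n z"
  have "n - 1 \<noteq> 0" "n \<noteq> 0" using n by simp_all
  then have coeffs: "l1 + (1 - l1) * 2 = c" "l2 * c = 1" "(1 - l2) * n = 1"
      "l2 * l1 = (n - 2) / n" "l2 * (1 - l1) = 1 / n" "1 - l2 = 1 / n"
    by (simp_all add: l1_def l2_def c_def divide_simps)
  have l1: "0 \<le> l1" "l1 \<le> 1" and l2: "0 \<le> l2" "l2 \<le> 1"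
    using n by (auto simp: l1_def l2_def divide_simps)
  have X2: "(\<lambda>\<omega>. 2 * X \<omega>) \<in> CZ \<Omega> Z" using CZ_scale[OF X] .
  have Y: "Y \<in> CZ \<Omega> Z" unfolding Y_def using CZ_scale[OF X] .
  have S: "S \<in> CZ \<Omega> Z" unfolding S_def using CZ_shiftZ[OF CZ_zero Zcont Zge] .
  have Y_split: "Y = (\<lambda>\<omega>. l1 * X \<omega> + (1 - l1) * (2 * X \<omega>))"
    by (simp add: Y_def fun_eq_iff algebra_simps flip: coeffs(1))
  have "X \<omega> = 0" if "\<omega> \<notin> \<Omega>" for \<omega> using X that unfolding CZ_def by blast
  then have split: "shiftZ \<Omega> Z X 1 z = (\<lambda>\<omega>. l2 * Y \<omega> + (1 - l2) * S \<omega>)"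
    by (auto simp: Y_def S_def shiftZ_def fun_eq_iff coeffs(2,3) mult.assoc[symmetric])
  have "\<psi> (shiftZ \<Omega> Z X 1 z) \<le> l2 * \<psi> Y + (1 - l2) * \<psi> S"
    unfolding split using convex_on_CZD[OF conv Y S l2] .
  also have "\<dots> \<le> l2 * (l1 * \<psi> X + (1 - l1) * \<psi> (\<lambda>\<omega>. 2 * X \<omega>)) + (1 - l2) * \<psi> S"
    using mult_left_mono[OF convex_on_CZD[OF conv X X2 l1] l2(1)] by (simp add: Y_split)
  also have "\<dots> = (l2 * l1) * \<psi> X + (l2 * (1 - l1)) * \<psi> (\<lambda>\<omega>. 2 * X \<omega>) + (1 - l2) * \<psi> S"
    by (simp add: algebra_simps)
  also have "\<dots> = ((n - 2) * \<psi> X + \<psi> (\<lambda>\<omega>. 2 * X \<omega>) + \<psi> S) / n"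
    by (simp only: coeffs(4-6) add_divide_distrib) simp
  finally show ?thesis unfolding S_def .
qed

theorem lemmaA2:
  fixes T J :: nat and e :: "nat \<times> nat \<Rightarrow> 'n::finite"
    and \<Omega> :: "(real^'n) set" and Z :: "real^'n \<Rightarrow> real"
    and \<psi> :: "(real^'n \<Rightarrow> real) \<Rightarrow> real"
  assumes T: "T \<ge> 1"
    and e: "bij_betw e ({..<T} \<times> {..J}) UNIV"
    and \<Omega>sub: "\<Omega> \<subseteq> state_space T J e" and \<Omega>ne: "\<Omega> \<noteq> {}"
    and Zcont: "continuous_on \<Omega> Z" and Zge: "\<forall>\<omega>\<in>\<Omega>. Z \<omega> \<ge> 1"
    and Zcpt: "\<forall>z::real. z \<ge> 0 \<longrightarrow> compact {\<omega>\<in>\<Omega>. Z \<omega> \<le> z}"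
    and incr: "increasing_on_CZ \<Omega> (CZ \<Omega> Z) \<psi>"
    and conv: "convex_on_CZ (CZ \<Omega> Z) \<psi>"
    and lim: "\<forall>n::nat. ((\<lambda>z. \<psi> (shiftZ \<Omega> Z (\<lambda>_. 0) (real n) z)) \<longlongrightarrow> \<psi> (\<lambda>_. 0)) at_top"
  shows "\<forall>X\<in>CZ \<Omega> Z. \<exists>\<epsilon>>0. ((\<lambda>z. \<psi> (shiftZ \<Omega> Z X \<epsilon> z)) \<longlongrightarrow> \<psi> X) at_top"
proof (intro ballI exI conjI)
  fix X assume X: "X \<in> CZ \<Omega> Z"
  define A where "A = \<psi> (\<lambda>\<omega>. 2 * X \<omega>) + \<psi> (\<lambda>_. 0) - 2 * \<psi> X"
  show "((\<lambda>z. \<psi> (shiftZ \<Omega> Z X 1 z)) \<longlongrightarrow> \<psi> X) at_top"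
  proof (rule tendsto_of_bounds_vanishing_in_n)
    show "\<psi> X \<le> \<psi> (shiftZ \<Omega> Z X 1 z)" for z
      using increasing_on_CZ_shiftZ[OF incr X _ Zcont Zge] by simp
    show "\<psi> (shiftZ \<Omega> Z X 1 z)
            \<le> \<psi> X + (A + (\<psi> (shiftZ \<Omega> Z (\<lambda>_. 0) (real n) z) - \<psi> (\<lambda>_. 0))) / real n"
      if "2 < n" for n z
      using convex_on_CZ_shiftZ_le[OF conv X Zcont Zge, of "real n" z] that
      by (simp add: A_def field_simps)
    show "((\<lambda>z. \<psi> (shiftZ \<Omega> Z (\<lambda>_. 0) (real n) z) - \<psi> (\<lambda>_. 0)) \<longlongrightarrow> 0) at_top" for n
      using tendsto_diff[OF lim[rule_format, of n] tendsto_const[of "\<psi> (\<lambda>_. 0)"]] by simp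
  qed
qed simp

end
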